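(* Let $f:\mathbb{N}\to\mathbb{R}$ with $f(1)=1$. Assume there exist an integer $N\geq2$, $C>0$ and $\gamma\in\mathbb{R}$ such that $f(n)=0$ for all $n\geq N+1$ and $|f(n)|\leq Cn^\gamma$ for all $n\leq N$. Then $$|f^{-1}(n)|\leq n^{\gamma+\varsigma}, \quad n\geq2,$$ where $\varsigma>0$ is the unique root of $\sum_{m=2}^{N} m^{-s} = \frac{1}{C}$.
   Context: $f^{-1}$ denotes the Dirichlet inverse of $f$: the arithmetic function with $\sum_{d\mid n} f(n/d) f^{-1}(d)=\varepsilon(n)$ for all $n$, where $\varepsilon(1)=1$ and $\varepsilon(n)=0$ for $n\ge2$. *)

theory Defs
  imports Complex_Main
begin

text \<open>Arithmetic functions are modelled as functions nat => real; only values at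
positive integers matter.\<close>

definition dirichlet_inverse :: "(nat \<Rightarrow> real) \<Rightarrow> nat \<Rightarrow> real" where
  "dirichlet_inverse f = (SOME g. \<forall>n\<ge>1.
      (\<Sum>d | d dvd n. f (n div d) * g d) = (if n = 1 then 1 else 0))"

end

theory Submission
  imports Defs
begin

text \<open>Write g for the Dirichlet inverse of f. Since f 1 = 1, the convolution identity is the
recurrence g n = - (\<Sum> d | d dvd n, d < n. f (n div d) * g d). Only cofactors m = n div d with
2 \<le> m \<le> N contribute, and strong induction gives
\<bar>g n\<bar> \<le> \<Sum> m. C m^\<gamma> (n/m)^(\<gamma>+\<sigma>) = C n^(\<gamma>+\<sigma>) \<Sum> m^(-\<sigma>) \<le> n^(\<gamma>+\<sigma>),
which is exactly where the choice of \<sigma> as a root of \<Sum> m^(-s) = 1/C comes in.\<close>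

lemma finite_divisors_with: "n \<ge> 1 \<Longrightarrow> finite {d. d dvd (n::nat) \<and> P d}"
  by (rule finite_subset[of _ "{..n}"]) (auto dest: dvd_imp_le)

lemma sum_divisors_split_self:
  fixes h :: "nat \<Rightarrow> real"
  assumes "n \<ge> 1"
  shows "(\<Sum>d | d dvd n. h d) = h n + (\<Sum>d | d dvd n \<and> d < n. h d)"
proof -
  have "{d. d dvd n} = insert n {d. d dvd n \<and> d < n}"
    using assms by (auto dest: dvd_imp_le)
  then show ?thesis
    using assms by (simp add: finite_divisors_with)
qed

function dirichlet_inverse_rec :: "(nat \<Rightarrow> real) \<Rightarrow> nat \<Rightarrow> real" where
  "dirichlet_inverse_rec f n = (if n \<le> 1 then 1 else
     - (\<Sum>d | d dvd n \<and> d < n. f (n div d) * dirichlet_inverse_rec f d))"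
  by auto
termination
  by (relation "measure snd") auto

declare dirichlet_inverse_rec.simps[simp del]

lemma dirichlet_inverse_rec_convolution:
  assumes "f 1 = 1" and "n \<ge> 1"
  shows "(\<Sum>d | d dvd n. f (n div d) * dirichlet_inverse_rec f d) = (if n = 1 then 1 else 0)"
proof (cases "n = 1")
  case True
  then show ?thesis
    using assms by (simp add: dirichlet_inverse_rec.simps)
next
  case False
  then show ?thesis
    using assms by (subst sum_divisors_split_self) (simp_all add: dirichlet_inverse_rec.simps[of f n])
qed

lemma dirichlet_inverse_convolution:
  assumes "f 1 = 1" and "n \<ge> 1"
  shows "(\<Sum>d | d dvd n. f (n div d) * dirichlet_inverse f d) = (if n = 1 then 1 else 0)"
proof -
  let ?P = "\<lambda>g. \<forall>n\<ge>1. (\<Sum>d | d dvd n. f (n div d) * g d) = (if n = 1 then 1 else (0::real))"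
  have "?P (dirichlet_inverse_rec f)"
    using dirichlet_inverse_rec_convolution[of f, OF assms(1)] by blast
  then have "?P (dirichlet_inverse f)"
    unfolding dirichlet_inverse_def by (rule someI[of ?P])
  then show ?thesis using assms(2) by blast
qed

lemma dirichlet_inverse_one: "f 1 = 1 \<Longrightarrow> dirichlet_inverse f 1 = 1"
  using dirichlet_inverse_convolution[of f 1] by simp

lemma dirichlet_inverse_recurrence:
  assumes "f 1 = 1" and "n \<ge> 2"
  shows "dirichlet_inverse f n = - (\<Sum>d | d dvd n \<and> d < n. f (n div d) * dirichlet_inverse f d)"
  using dirichlet_inverse_convolution[of f n, OF assms(1)] assms
  by (simp add: sum_divisors_split_self eq_neg_iff_add_eq_0)

lemma sum_proper_divisors_cofactor_le:
  fixes h :: "nat \<Rightarrow> real"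
  assumes "n \<ge> 1" and nonneg: "\<And>m. 2 \<le> m \<Longrightarrow> m \<le> N \<Longrightarrow> 0 \<le> h m"
  shows "(\<Sum>d | d dvd n \<and> d < n \<and> n div d \<le> N. h (n div d)) \<le> (\<Sum>m = 2..N. h m)"
proof -
  define D where "D = {d. d dvd n \<and> d < n \<and> n div d \<le> N}"
  have "inj_on (\<lambda>d. n div d) D"
  proof (rule inj_onI)
    fix x y assume "x \<in> D" "y \<in> D" "n div x = n div y"
    then have "n div x * x = n" "n div x * y = n" by (auto simp: D_def)
    moreover have "n div x \<noteq> 0" using \<open>n div x * x = n\<close> assms(1) by (metis mult_0 not_one_le_zero)
    ultimately show "x = y" by (metis mult_left_cancel)
  qed
  moreover have "(\<lambda>d. n div d) ` D \<subseteq> {2..N}"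
  proof
    fix m assume "m \<in> (\<lambda>d. n div d) ` D"
    then obtain d where d: "d dvd n" "d < n" "n div d \<le> N" and m: "m = n div d"
      by (auto simp: D_def)
    then have "n = m * d" by simp
    then have "m \<noteq> 0" and "m \<noteq> 1" using assms(1) d(2) by auto
    then show "m \<in> {2..N}" using d(3) m by simp
  qed
  ultimately have "(\<Sum>m\<in>(\<lambda>d. n div d) ` D. h m) \<le> (\<Sum>m = 2..N. h m)"
    using nonneg by (intro sum_mono2) auto
  with \<open>inj_on (\<lambda>d. n div d) D\<close> have "(\<Sum>d\<in>D. h (n div d)) \<le> (\<Sum>m = 2..N. h m)"
    by (simp add: sum.reindex)
  then show ?thesis by (simp add: D_def)
qed

lemma powr_cofactor_eq:
  fixes C \<gamma> \<sigma> :: real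
  assumes "n = m * d"
  shows "C * real m powr \<gamma> * real d powr (\<gamma> + \<sigma>) = C * real n powr (\<gamma> + \<sigma>) * real m powr (- \<sigma>)"
proof -
  have "real m powr \<gamma> = real m powr (\<gamma> + \<sigma>) * real m powr (- \<sigma>)"
    by (simp add: powr_add[symmetric])
  then show ?thesis
    by (simp add: assms powr_mult)
qed

lemma dirichlet_inverse_powr_bound:
  fixes f :: "nat \<Rightarrow> real" and N :: nat and C \<gamma> \<sigma> :: real
  assumes f1: "f 1 = 1"
    and C: "C \<ge> 0"
    and vanish: "\<And>m. m > N \<Longrightarrow> f m = 0"
    and bound: "\<And>m. 2 \<le> m \<Longrightarrow> m \<le> N \<Longrightarrow> \<bar>f m\<bar> \<le> C * real m powr \<gamma>"
    and sum_le: "C * (\<Sum>m = 2..N. real m powr (- \<sigma>)) \<le> 1"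
    and "n \<ge> 1"
  shows "\<bar>dirichlet_inverse f n\<bar> \<le> real n powr (\<gamma> + \<sigma>)"
  using \<open>n \<ge> 1\<close>
proof (induction n rule: less_induct)
  case (less n)
  let ?g = "dirichlet_inverse f"
  show ?case
  proof (cases "n = 1")
    case True
    then show ?thesis using dirichlet_inverse_one[of f, OF f1] by simp
  next
    case False
    with less.prems have n2: "n \<ge> 2" by simp
    define D where "D = {d. d dvd n \<and> d < n \<and> n div d \<le> N}"
    have "(\<Sum>d | d dvd n \<and> d < n. f (n div d) * ?g d) = (\<Sum>d\<in>D. f (n div d) * ?g d)"
      using n2 vanish unfolding D_def
      by (intro sum.mono_neutral_right) (auto simp: finite_divisors_with not_le)
    then have "\<bar>?g n\<bar> = \<bar>\<Sum>d\<in>D. f (n div d) * ?g d\<bar>"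
      by (simp add: dirichlet_inverse_recurrence[of f, OF f1 n2])
    also have "\<dots> \<le> (\<Sum>d\<in>D. \<bar>f (n div d)\<bar> * \<bar>?g d\<bar>)"
      by (rule order_trans[OF sum_abs]) (simp add: abs_mult)
    also have "\<dots> \<le> (\<Sum>d\<in>D. C * real (n div d) powr \<gamma> * real d powr (\<gamma> + \<sigma>))"
    proof (rule sum_mono)
      fix d assume "d \<in> D"
      then have d: "d dvd n" "d < n" "n div d \<le> N" by (auto simp: D_def)
      moreover have "n = n div d * d" using d(1) by simp
      ultimately have "d \<ge> 1" and "n div d \<ge> 2"
        using n2 by auto
      then show "\<bar>f (n div d)\<bar> * \<bar>?g d\<bar> \<le> C * real (n div d) powr \<gamma> * real d powr (\<gamma> + \<sigma>)"
        using d C by (intro mult_mono bound less.IH) auto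
    qed
    also have "\<dots> = C * real n powr (\<gamma> + \<sigma>) * (\<Sum>d\<in>D. real (n div d) powr (- \<sigma>))"
      by (simp add: sum_distrib_left powr_cofactor_eq D_def)
    also have "\<dots> \<le> C * real n powr (\<gamma> + \<sigma>) * (\<Sum>m = 2..N. real m powr (- \<sigma>))"
      using C n2 unfolding D_def by (intro mult_left_mono sum_proper_divisors_cofactor_le) auto
    also have "\<dots> \<le> real n powr (\<gamma> + \<sigma>)"
      using mult_left_mono[OF sum_le, of "real n powr (\<gamma> + \<sigma>)"] by (simp add: mult_ac)
    finally show ?thesis .
  qed
qed

theorem proposition3p16:
  fixes f :: "nat \<Rightarrow> real" and N :: nat and C \<gamma> \<sigma> :: real
  assumes f1: "f 1 = 1"
    and N2: "N \<ge> 2"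
    and Cpos: "C > 0"
    and vanish: "\<And>n. n \<ge> N + 1 \<Longrightarrow> f n = 0"
    and bound: "\<And>n. 1 \<le> n \<Longrightarrow> n \<le> N \<Longrightarrow> \<bar>f n\<bar> \<le> C * real n powr \<gamma>"
    and root: "(\<Sum>m = 2..N. real m powr (- \<sigma>)) = 1 / C"
  shows "\<forall>n\<ge>2. \<bar>dirichlet_inverse f n\<bar> \<le> real n powr (\<gamma> + \<sigma>)"
proof (intro allI impI)
  fix n :: nat assume "n \<ge> 2"
  have "C * (\<Sum>m = 2..N. real m powr (- \<sigma>)) \<le> 1"
    using root Cpos by simp
  then show "\<bar>dirichlet_inverse f n\<bar> \<le> real n powr (\<gamma> + \<sigma>)"
    using \<open>n \<ge> 2\<close> Cpos vanish bound
    by (intro dirichlet_inverse_powr_bound[of f, OF f1]) auto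
qed

end
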